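(* Let $c_2,c_3$ be constants and $\mu(t)=t^2+c_2t+c_3$. Let $\{P_n\}_{n\ge0}$ be a sequence of monic orthogonal polynomials in the lattice $\mu(t)$ with three-term recurrence relation $\mu(t)P_n=P_{n+1}+\beta_nP_n+\gamma_nP_{n-1}$ ($P_{-1}=0$, $P_0=1$, $\gamma_n\ne0$). Let $L$ be the infinite tridiagonal matrix with $L_{n,n}=\beta_n$, $L_{n,n+1}=1$, $L_{n,n-1}=\gamma_n$, and let $M$ be the infinite tridiagonal matrix with $M_{n,n}=\beta'_n$, $M_{n,n+1}=1$, $M_{n,n-1}=\gamma'_n$, where $\beta'_n,\gamma'_n$ are the three-term recurrence coefficients of the sequence of divided differences, $\mu(t)Q_n=Q_{n+1}+\beta'_nQ_n+\gamma'_nQ_{n-1}$ with $Q_n=P'_{n+1}$. Let $D$ be the infinite matrix with $D_{n+1,n}=n+1$ ($n\ge0$) and all other entries zero. Then $\{P_n\}$ is a sequence of classical orthogonal polynomials on the quadratic lattice $\mu(t)$ if and only if $$L^2D-2LDM+DM^2-\frac12\,(LD+DM)+\Big(c_3+\frac1{16}-\frac{c_2^2}{4}\Big)D=0 .$$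
   Context: The divided-difference operator is $\mathbb{D}f(t)=\frac{f(t+1/2)-f(t-1/2)}{\mu(t+1/2)-\mu(t-1/2)}$; it maps polynomials of degree $n$ in $\mu(t)$ to polynomials of degree $n-1$ in $\mu(t)$. A sequence of monic polynomials $\{R_n\}$ in $\mu(t)$ ($\deg R_n=n$) is orthogonal if it satisfies $\mu(t)R_n=R_{n+1}+b_nR_n+c_nR_{n-1}$, $R_{-1}=0$, $R_0=1$, with $c_n\neq0$. Set $P'_n=\frac1n\mathbb{D}P_n$ for $n\ge1$. The sequence $\{P_n\}$ is called classical if $\{P'_n\}_{n\ge1}$ is also a sequence of monic orthogonal polynomials in $\mu(t)$. Indices of infinite matrices start at $0$; products of these banded infinite matrices are well defined. *)

theory Defs
  imports "HOL-Computational_Algebra.Polynomial"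
begin

text \<open>A polynomial in the lattice mu(t) = t^2 + c2 t + c3 is represented by a polynomial
  p in one variable x, standing for the function t \<mapsto> p(mu(t)).\<close>

definition mu_poly :: "'a::field_char_0 \<Rightarrow> 'a \<Rightarrow> 'a poly" where
  "mu_poly c2 c3 = [:c3, c2, 1:]"

definition mu_shift :: "'a::field_char_0 \<Rightarrow> 'a \<Rightarrow> 'a \<Rightarrow> 'a poly" where
  "mu_shift c2 c3 h = pcompose (mu_poly c2 c3) [:h, 1:]"

definition Ddiff :: "'a::field_char_0 \<Rightarrow> 'a \<Rightarrow> 'a poly \<Rightarrow> 'a poly" where
  "Ddiff c2 c3 p = (THE q. pcompose q (mu_poly c2 c3) *
        (mu_shift c2 c3 (1/2) - mu_shift c2 c3 (-1/2))
      = pcompose p (mu_shift c2 c3 (1/2)) - pcompose p (mu_shift c2 c3 (-1/2)))"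

definition Pprime :: "'a::field_char_0 \<Rightarrow> 'a \<Rightarrow> (nat \<Rightarrow> 'a poly) \<Rightarrow> nat \<Rightarrow> 'a poly" where
  "Pprime c2 c3 P n = smult (1 / of_nat n) (Ddiff c2 c3 (P n))"

definition ttrr :: "(nat \<Rightarrow> 'a::field_char_0 poly) \<Rightarrow> (nat \<Rightarrow> 'a) \<Rightarrow> (nat \<Rightarrow> 'a) \<Rightarrow> bool" where
  "ttrr R b c \<longleftrightarrow> R 0 = 1 \<and>
     (\<forall>n. [:0, 1:] * R n = R (Suc n) + smult (b n) (R n)
            + smult (c n) (if n = 0 then 0 else R (n - 1)))"

definition monic_seq :: "(nat \<Rightarrow> 'a::field_char_0 poly) \<Rightarrow> bool" where
  "monic_seq R \<longleftrightarrow> (\<forall>n. degree (R n) = n \<and> lead_coeff (R n) = 1)"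

definition orthogonal_seq :: "(nat \<Rightarrow> 'a::field_char_0 poly) \<Rightarrow> bool" where
  "orthogonal_seq R \<longleftrightarrow> monic_seq R \<and>
     (\<exists>b c. ttrr R b c \<and> (\<forall>n\<ge>1. c n \<noteq> 0))"

definition classical :: "'a::field_char_0 \<Rightarrow> 'a \<Rightarrow> (nat \<Rightarrow> 'a poly) \<Rightarrow> bool" where
  "classical c2 c3 P \<longleftrightarrow> orthogonal_seq (\<lambda>n. Pprime c2 c3 P (Suc n))"

text \<open>Infinite matrices indexed from 0. Product summing over the (finite, for the
  banded matrices considered) support of row i of A.\<close>
type_synonym 'a imat = "nat \<Rightarrow> nat \<Rightarrow> 'a"

definition imult :: "'a::field_char_0 imat \<Rightarrow> 'a imat \<Rightarrow> 'a imat" where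
  "imult A B = (\<lambda>i j. \<Sum>k | A i k \<noteq> 0. A i k * B k j)"

definition tridiag :: "(nat \<Rightarrow> 'a::field_char_0) \<Rightarrow> (nat \<Rightarrow> 'a) \<Rightarrow> 'a imat" where
  "tridiag b c = (\<lambda>n m. if m = n then b n else if m = Suc n then 1
                         else if Suc m = n then c n else 0)"

definition Dmat :: "'a::field_char_0 imat" where
  "Dmat = (\<lambda>n m. if n = Suc m then of_nat n else 0)"

end

theory Submission
  imports Defs
begin

text \<open>Write \<open>x\<close> for \<open>mu(t)\<close> and \<open>S p\<close> for the average of \<open>p(mu(t + 1/2))\<close> and
  \<open>p(mu(t - 1/2))\<close>. The divided difference obeys the product rules
  \<open>D(x p) = (x + 1/4) D p + S p\<close> and \<open>S(x p) = (x + 1/4) S p + (x + c2\<^sup>2/4 - c3) D p\<close>;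
  eliminating \<open>S\<close> gives the operator identity
  \<open>D x\<^sup>2 - 2 x D x + x\<^sup>2 D - (D x + x D)/2 + (c3 + 1/16 - c2\<^sup>2/4) D = 0\<close>.

  The matrices \<open>L\<close> and \<open>M\<close> act on the columns \<open>(P\<^sub>n)\<close> and \<open>(Q\<^sub>n)\<close> as multiplication
  by \<open>x\<close>, and \<open>D\<close> maps \<open>(Q\<^sub>n)\<close> to \<open>(D P\<^sub>n)\<close>. Hence row \<open>i\<close> of the matrix of the
  theorem, applied to \<open>(Q\<^sub>n)\<close>, is the operator identity applied to \<open>P\<^sub>i\<close>, which vanishes;
  as the \<open>Q\<^sub>n\<close> are monic of degree \<open>n\<close>, the matrix itself is zero. Its entry \<open>(n + 3, n)\<close>
  is \<open>(n+1) \<gamma>\<^sub>n\<^sub>+\<^sub>3 \<gamma>\<^sub>n\<^sub>+\<^sub>2 - 2 (n+2) \<gamma>\<^sub>n\<^sub>+\<^sub>3 \<gamma>'\<^sub>n\<^sub>+\<^sub>1 + (n+3) \<gamma>'\<^sub>n\<^sub>+\<^sub>2 \<gamma>'\<^sub>n\<^sub>+\<^sub>1\<close>, so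
  \<open>\<gamma>'\<close> never vanishes and \<open>(Q\<^sub>n)\<close> is orthogonal. Thus, once \<open>(Q\<^sub>n)\<close> satisfies a
  three-term recurrence, both sides of the equivalence hold.\<close>

section \<open>Divided difference and average on the quadratic lattice\<close>

text \<open>\<open>diff_avg p = (D p, S p)\<close>, computed by Horner's rule from the product rules above,
  whose coefficients come from \<open>mu(t \<plusminus> 1/2) = mu(t) + 1/4 \<plusminus> (t + c2/2)\<close> and
  \<open>(t + c2/2)\<^sup>2 = mu(t) + c2\<^sup>2/4 - c3\<close>.\<close>

definition diff_avg_step ::
    "'a::field_char_0 \<Rightarrow> 'a \<Rightarrow> 'a \<Rightarrow> 'a poly \<times> 'a poly \<Rightarrow> 'a poly \<times> 'a poly" where
  "diff_avg_step c2 c3 a ds = (case ds of (d, s) \<Rightarrow>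
     ([:1/4, 1:] * d + s, [:a:] + [:1/4, 1:] * s + [:c2^2/4 - c3, 1:] * d))"

definition diff_avg :: "'a::field_char_0 \<Rightarrow> 'a \<Rightarrow> 'a poly \<Rightarrow> 'a poly \<times> 'a poly" where
  "diff_avg c2 c3 p = fold_coeffs (diff_avg_step c2 c3) p (0, 0)"

lemma diff_avg_0 [simp]: "diff_avg c2 c3 0 = (0, 0)"
  by (simp add: diff_avg_def)

lemma diff_avg_pCons: "diff_avg c2 c3 (pCons a p) = diff_avg_step c2 c3 a (diff_avg c2 c3 p)"
  by (cases "p = 0 \<and> a = 0") (auto simp: diff_avg_def diff_avg_step_def)

lemma mu_shift_half:
  assumes "\<sigma>\<^sup>2 = 1"
  shows "mu_shift c2 c3 (\<sigma> / 2) = mu_poly c2 c3 + [:1/4:] + smult \<sigma> [:c2/2, 1:]"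
  using assms by (simp add: mu_shift_def mu_poly_def pcompose_pCons field_simps power2_eq_square)

lemma mu_poly_completed_square:
  "[:c2/2, 1:] * [:c2/2, 1:] = mu_poly c2 c3 + [:c2\<^sup>2/4 - c3 :: 'a::field_char_0:]"
  by (simp add: mu_poly_def field_simps power2_eq_square)

lemma diff_avg_shift:
  fixes c2 c3 :: "'a::field_char_0"
  assumes \<sigma>: "\<sigma>\<^sup>2 = 1"
  shows "pcompose p (mu_shift c2 c3 (\<sigma> / 2)) = pcompose (snd (diff_avg c2 c3 p)) (mu_poly c2 c3)
           + smult \<sigma> ([:c2/2, 1:] * pcompose (fst (diff_avg c2 c3 p)) (mu_poly c2 c3))"
proof (induction p)
  case 0
  show ?case by simp
next
  case (pCons a p)
  obtain d s where ds: "diff_avg c2 c3 p = (d, s)" by force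
  let ?m = "mu_poly c2 c3" and ?S = "[:c2/2, 1:]"
  have ring: "A + (Y + smult \<sigma> S) * (u + smult \<sigma> (S * v))
      = (A + Y * u + S * S * v) + smult \<sigma> (S * (Y * v + u))" for A Y S u v :: "'a poly"
    using \<sigma> by (simp add: smult_add_right algebra_simps power2_eq_square)
  have fst_step: "pcompose (fst (diff_avg c2 c3 (pCons a p))) ?m
      = (?m + [:1/4:]) * pcompose d ?m + pcompose s ?m"
    by (simp add: diff_avg_pCons diff_avg_step_def ds pcompose_add pcompose_mult
        pcompose_pCons pcompose_smult algebra_simps)
  have snd_step: "pcompose (snd (diff_avg c2 c3 (pCons a p))) ?m
      = [:a:] + (?m + [:1/4:]) * pcompose s ?m + (?m + [:c2\<^sup>2/4 - c3:]) * pcompose d ?m"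
    by (simp add: diff_avg_pCons diff_avg_step_def ds pcompose_add pcompose_mult
        pcompose_pCons pcompose_smult algebra_simps)
  have "pcompose (pCons a p) (mu_shift c2 c3 (\<sigma> / 2))
      = [:a:] + (?m + [:1/4:] + smult \<sigma> ?S) * (pcompose s ?m + smult \<sigma> (?S * pcompose d ?m))"
    using pCons.IH by (simp add: pcompose_pCons mu_shift_half \<sigma> ds)
  also have "\<dots> = pcompose (snd (diff_avg c2 c3 (pCons a p))) ?m
      + smult \<sigma> (?S * pcompose (fst (diff_avg c2 c3 (pCons a p))) ?m)"
    unfolding ring fst_step snd_step by (simp only: mu_poly_completed_square[of c2 c3])
  finally show ?case .
qed

lemma pcompose_mu_shift_half:
  fixes c2 c3 :: "'a::field_char_0"
  shows "pcompose p (mu_shift c2 c3 (1/2)) = pcompose (snd (diff_avg c2 c3 p)) (mu_poly c2 c3)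
           + [:c2/2, 1:] * pcompose (fst (diff_avg c2 c3 p)) (mu_poly c2 c3)"
    and "pcompose p (mu_shift c2 c3 (-1/2)) = pcompose (snd (diff_avg c2 c3 p)) (mu_poly c2 c3)
           - [:c2/2, 1:] * pcompose (fst (diff_avg c2 c3 p)) (mu_poly c2 c3)"
  using diff_avg_shift[of 1 p c2 c3] diff_avg_shift[of "-1" p c2 c3] by simp_all

lemma mu_shift_diff:
  "mu_shift c2 c3 (1/2) - mu_shift c2 c3 (-1/2) = [:c2, 2 :: 'a::field_char_0:]"
  using mu_shift_half[of 1 c2 c3] mu_shift_half[of "-1" c2 c3] by simp

lemma fst_diff_avg_correct:
  "pcompose (fst (diff_avg c2 c3 p)) (mu_poly c2 c3)
      * (mu_shift c2 c3 (1/2) - mu_shift c2 c3 (-1/2))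
      = pcompose p (mu_shift c2 c3 (1/2)) - pcompose p (mu_shift c2 c3 (-1/2))"
proof -
  have "d * (S + S) = (u + S * d) - (u - S * d)" for d u S :: "'a poly"
    by (simp add: algebra_simps)
  moreover have "[:c2, 2:] = [:c2/2, 1:] + [:c2/2, 1:]" by simp
  ultimately show ?thesis unfolding pcompose_mu_shift_half mu_shift_diff by metis
qed

lemma Ddiff_eqI:
  fixes c2 c3 :: "'a::field_char_0"
  assumes q: "pcompose q (mu_poly c2 c3) * (mu_shift c2 c3 (1/2) - mu_shift c2 c3 (-1/2))
      = pcompose p (mu_shift c2 c3 (1/2)) - pcompose p (mu_shift c2 c3 (-1/2))"
  shows "Ddiff c2 c3 p = q"
  unfolding Ddiff_def
proof (rule the_equality)
  fix r
  assume r: "pcompose r (mu_poly c2 c3) * (mu_shift c2 c3 (1/2) - mu_shift c2 c3 (-1/2))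
      = pcompose p (mu_shift c2 c3 (1/2)) - pcompose p (mu_shift c2 c3 (-1/2))"
  have "pcompose (r - q) (mu_poly c2 c3) * (mu_shift c2 c3 (1/2) - mu_shift c2 c3 (-1/2)) = 0"
    by (simp only: pcompose_diff left_diff_distrib r q diff_self)
  then have "pcompose (r - q) (mu_poly c2 c3) * [:c2, 2:] = 0" by (simp only: mu_shift_diff)
  then have "pcompose (r - q) (mu_poly c2 c3) = 0" by (simp only: mult_eq_0_iff) simp
  then have "r - q = 0" by (rule pcompose_eq_0) (simp add: mu_poly_def)
  then show "r = q" by simp
qed (fact q)

lemma Ddiff_eq_fst_diff_avg: "Ddiff c2 c3 p = fst (diff_avg c2 c3 p)"
  by (rule Ddiff_eqI) (rule fst_diff_avg_correct)

lemma Ddiff_correct: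
  "pcompose (Ddiff c2 c3 p) (mu_poly c2 c3) * (mu_shift c2 c3 (1/2) - mu_shift c2 c3 (-1/2))
      = pcompose p (mu_shift c2 c3 (1/2)) - pcompose p (mu_shift c2 c3 (-1/2))"
  unfolding Ddiff_eq_fst_diff_avg by (rule fst_diff_avg_correct)

lemma Ddiff_sum_smult:
  fixes c2 c3 :: "'a::field_char_0"
  shows "Ddiff c2 c3 (\<Sum>k\<in>S. smult (a k) (v k)) = (\<Sum>k\<in>S. smult (a k) (Ddiff c2 c3 (v k)))"
proof (rule Ddiff_eqI)
  let ?w = "mu_shift c2 c3 (1/2) - mu_shift c2 c3 (-1/2)"
  have "pcompose (\<Sum>k\<in>S. smult (a k) (Ddiff c2 c3 (v k))) (mu_poly c2 c3) * ?w
      = (\<Sum>k\<in>S. smult (a k) (pcompose (Ddiff c2 c3 (v k)) (mu_poly c2 c3) * ?w))"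
    by (simp add: pcompose_sum pcompose_smult sum_distrib_right)
  also have "\<dots> = (\<Sum>k\<in>S. smult (a k) (pcompose (v k) (mu_shift c2 c3 (1/2))
      - pcompose (v k) (mu_shift c2 c3 (-1/2))))"
    unfolding Ddiff_correct ..
  also have "\<dots> = pcompose (\<Sum>k\<in>S. smult (a k) (v k)) (mu_shift c2 c3 (1/2))
      - pcompose (\<Sum>k\<in>S. smult (a k) (v k)) (mu_shift c2 c3 (-1/2))"
    by (simp add: pcompose_sum pcompose_smult smult_diff_right sum_subtractf)
  finally show "pcompose (\<Sum>k\<in>S. smult (a k) (Ddiff c2 c3 (v k))) (mu_poly c2 c3) * ?w
      = pcompose (\<Sum>k\<in>S. smult (a k) (v k)) (mu_shift c2 c3 (1/2))
      - pcompose (\<Sum>k\<in>S. smult (a k) (v k)) (mu_shift c2 c3 (-1/2))" .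
qed

lemma Ddiff_1 [simp]: "Ddiff c2 c3 1 = 0"
  by (simp add: Ddiff_eq_fst_diff_avg diff_avg_pCons diff_avg_step_def flip: pCons_one)

lemma Ddiff_mult_x_identity:
  fixes c2 c3 :: "'a::field_char_0"
  defines "x \<equiv> [:0, 1:]"
  shows "Ddiff c2 c3 (x * (x * p)) - smult 2 (x * Ddiff c2 c3 (x * p)) + x * (x * Ddiff c2 c3 p)
     - smult (1/2) (Ddiff c2 c3 (x * p) + x * Ddiff c2 c3 p)
     + smult (c3 + 1/16 - c2\<^sup>2/4) (Ddiff c2 c3 p) = 0"
proof -
  obtain d s where ds: "diff_avg c2 c3 p = (d, s)" by force
  define y where "y = [:1/4, 1 :: 'a:]"
  define k where "k = [:c2\<^sup>2/4 - c3, 1 :: 'a:]"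
  have step: "diff_avg c2 c3 (x * q)
      = (case diff_avg c2 c3 q of (d, s) \<Rightarrow> (y * d + s, y * s + k * d))" for q
    by (simp add: x_def y_def k_def diff_avg_pCons diff_avg_step_def split: prod.split)
  have D0: "Ddiff c2 c3 p = d" and D1: "Ddiff c2 c3 (x * p) = y * d + s"
    and D2: "Ddiff c2 c3 (x * (x * p)) = y * (y * d + s) + (y * s + k * d)"
    by (simp_all add: Ddiff_eq_fst_diff_avg step ds)
  have smult_const: "smult c q = [:c:] * q" for c and q :: "'a poly"
    by simp
  have "Ddiff c2 c3 (x * (x * p)) - smult 2 (x * Ddiff c2 c3 (x * p)) + x * (x * Ddiff c2 c3 p)
     - smult (1/2) (Ddiff c2 c3 (x * p) + x * Ddiff c2 c3 p)
     + smult (c3 + 1/16 - c2\<^sup>2/4) (Ddiff c2 c3 p)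
     = (y * y + k - [:2:] * x * y + x * x - [:1/2:] * (y + x) + [:c3 + 1/16 - c2\<^sup>2/4:]) * d
       + ([:2:] * y - [:2:] * x - [:1/2:]) * s"
    unfolding D0 D1 D2 smult_const
    by (simp del: mult_pCons_left mult_pCons_right add: algebra_simps flip: numeral_poly)
  also have "\<dots> = 0" \<comment> \<open>both coefficients vanish because \<open>y = x + 1/4\<close>\<close>
    by (simp add: x_def y_def k_def field_simps)
  finally show ?thesis .
qed

section \<open>Infinite matrices acting on sequences of polynomials\<close>

lemma smult_sum_right: "smult a (\<Sum>k\<in>S. f k) = (\<Sum>k\<in>S. smult a (f k))"
  by (induction S rule: infinite_finite_induct) (simp_all add: smult_add_right)

definition row_support :: "'a::zero imat \<Rightarrow> nat \<Rightarrow> nat set" where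
  "row_support A i = {k. A i k \<noteq> 0}"

definition row_finite :: "'a::zero imat \<Rightarrow> bool" where
  "row_finite A \<longleftrightarrow> (\<forall>i. finite (row_support A i))"

definition imat_act :: "'a::comm_ring_1 imat \<Rightarrow> (nat \<Rightarrow> 'a poly) \<Rightarrow> nat \<Rightarrow> 'a poly" where
  "imat_act A v i = (\<Sum>k\<in>row_support A i. smult (A i k) (v k))"

lemma imat_act_eq_sum:
  assumes "finite S" "row_support A i \<subseteq> S"
  shows "imat_act A v i = (\<Sum>k\<in>S. smult (A i k) (v k))"
  unfolding imat_act_def using assms by (intro sum.mono_neutral_left) (auto simp: row_support_def)

lemma imult_eq_sum_row_support: "imult A B i j = (\<Sum>k\<in>row_support A i. A i k * B k j)"
  by (simp add: imult_def row_support_def)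

lemma row_support_imult: "row_support (imult A B) i \<subseteq> (\<Union>k\<in>row_support A i. row_support B k)"
proof
  fix j
  assume "j \<in> row_support (imult A B) i"
  then have "(\<Sum>k\<in>row_support A i. A i k * B k j) \<noteq> 0"
    by (simp add: row_support_def imult_eq_sum_row_support)
  then obtain k where "k \<in> row_support A i" "A i k * B k j \<noteq> 0"
    by (rule sum.not_neutral_contains_not_neutral)
  then show "j \<in> (\<Union>k\<in>row_support A i. row_support B k)"
    by (auto simp: row_support_def)
qed

lemma row_finite_imult: "row_finite A \<Longrightarrow> row_finite B \<Longrightarrow> row_finite (imult A B)"
  unfolding row_finite_def by (meson finite_UN_I finite_subset row_support_imult)

lemma imat_act_imult:
  assumes A: "row_finite A" and B: "row_finite B"
  shows "imat_act (imult A B) v i = imat_act A (imat_act B v) i"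
proof -
  define T where "T = (\<Union>k\<in>row_support A i. row_support B k)"
  have T: "finite T" using A B unfolding T_def row_finite_def by blast
  have "imat_act (imult A B) v i = (\<Sum>j\<in>T. smult (imult A B i j) (v j))"
    using row_support_imult by (intro imat_act_eq_sum T) (simp add: T_def)
  also have "\<dots> = (\<Sum>k\<in>row_support A i. smult (A i k) (\<Sum>j\<in>T. smult (B k j) (v j)))"
    by (simp add: imult_eq_sum_row_support smult_sum smult_sum_right sum.swap[of _ T])
  also have "\<dots> = (\<Sum>k\<in>row_support A i. smult (A i k) (imat_act B v k))"
    by (intro sum.cong refl arg_cong[where f = "smult _"] imat_act_eq_sum[symmetric] T)
      (auto simp: T_def)
  finally show ?thesis by (simp add: imat_act_def)
qed

lemma imat_act_mult_left: "imat_act A (\<lambda>k. p * v k) i = p * imat_act A v i"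
  by (simp add: imat_act_def sum_distrib_left)

lemma imat_act_Ddiff: "imat_act A (\<lambda>k. Ddiff c2 c3 (v k)) i = Ddiff c2 c3 (imat_act A v i)"
  by (simp add: imat_act_def Ddiff_sum_smult)

definition banded :: "int \<Rightarrow> int \<Rightarrow> 'a::zero imat \<Rightarrow> bool" where
  "banded lo hi A \<longleftrightarrow> (\<forall>i k. A i k \<noteq> 0 \<longrightarrow> lo \<le> int i - int k \<and> int i - int k \<le> hi)"

lemma banded_eq_0:
  "banded lo hi A \<Longrightarrow> \<not> (lo \<le> int i - int k \<and> int i - int k \<le> hi) \<Longrightarrow> A i k = 0"
  unfolding banded_def by blast

lemma banded_row_finite:
  assumes "banded lo hi A"
  shows "row_finite A"
  unfolding row_finite_def
proof
  fix i
  have "row_support A i \<subseteq> {..i + nat (- lo)}"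
  proof
    fix k
    assume "k \<in> row_support A i"
    then have "lo \<le> int i - int k" using assms by (auto simp: row_support_def banded_def)
    then show "k \<in> {..i + nat (- lo)}" by simp
  qed
  then show "finite (row_support A i)" by (rule finite_subset) simp
qed

lemma banded_imult:
  assumes A: "banded lo1 hi1 A" and B: "banded lo2 hi2 B"
  shows "banded (lo1 + lo2) (hi1 + hi2) (imult A B)"
  unfolding banded_def
proof (intro allI impI)
  fix i j
  assume "imult A B i j \<noteq> 0"
  then obtain k where "k \<in> row_support A i" "j \<in> row_support B k"
    using row_support_imult[of A B i] by (auto simp: row_support_def)
  with A B show "lo1 + lo2 \<le> int i - int j \<and> int i - int j \<le> hi1 + hi2"
    by (force simp: row_support_def banded_def)
qed

lemma banded_tridiag: "banded (-1) 1 (tridiag b c)"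
  by (auto simp: banded_def tridiag_def)

lemma banded_Dmat: "banded 1 1 Dmat"
  by (auto simp: banded_def Dmat_def)

lemma imult_banded_corner:
  assumes A: "banded lo1 hi1 A" and B: "banded lo2 hi2 B"
    and k: "int i - int k = hi1" "int k - int j = hi2"
  shows "imult A B i j = A i k * B k j"
proof -
  have "A i l * B l j = 0" if "l \<noteq> k" for l
  proof (rule ccontr)
    assume "A i l * B l j \<noteq> 0"
    then have "int i - int l \<le> hi1" "int l - int j \<le> hi2"
      using A B by (auto simp: banded_def)
    with k \<open>l \<noteq> k\<close> show False by linarith
  qed
  then have "A i l * B l j = (if l = k then A i k * B k j else 0)" for l
    by simp
  then have "imult A B i j = (\<Sum>l\<in>row_support A i. if l = k then A i k * B k j else 0)"
    by (simp add: imult_eq_sum_row_support)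
  also have "\<dots> = A i k * B k j"
    using banded_row_finite[OF A] by (simp add: row_finite_def row_support_def)
  finally show ?thesis .
qed

lemma imat_act_tridiag:
  "imat_act (tridiag b c) v i
    = v (Suc i) + smult (b i) (v i) + smult (c i) (if i = 0 then 0 else v (i - 1))"
proof -
  have "imat_act (tridiag b c) v i = (\<Sum>k\<in>{i - 1, i, Suc i}. smult (tridiag b c i k) (v k))"
    by (rule imat_act_eq_sum) (auto simp: row_support_def tridiag_def)
  then show ?thesis by (cases i) (simp_all add: tridiag_def)
qed

lemma imat_act_tridiag_ttrr: "ttrr R b c \<Longrightarrow> imat_act (tridiag b c) R i = [:0, 1:] * R i"
  by (simp add: ttrr_def imat_act_tridiag)

lemma imat_act_Dmat: "imat_act Dmat v i = (if i = 0 then 0 else smult (of_nat i) (v (i - 1)))"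
proof -
  have "imat_act Dmat v i = (\<Sum>k\<in>{i - 1}. smult (Dmat i k) (v k))"
    by (rule imat_act_eq_sum) (auto simp: row_support_def Dmat_def)
  then show ?thesis by (cases i) (simp_all add: Dmat_def)
qed

lemma imat_act_Dmat_Pprime:
  fixes c2 c3 :: "'a::field_char_0"
  assumes "P 0 = 1"
  shows "imat_act Dmat (\<lambda>n. Pprime c2 c3 P (Suc n)) i = Ddiff c2 c3 (P i)"
  using assms by (cases i) (simp_all add: imat_act_Dmat Pprime_def del: of_nat_Suc)

lemma ttrr_imp_monic_seq:
  assumes "ttrr R b c"
  shows "monic_seq R"
proof -
  have "degree (R n) = n \<and> lead_coeff (R n) = 1" for n
  proof (induction n rule: less_induct)
    case (less n)
    show ?case
    proof (cases n)
      case 0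
      then show ?thesis using assms by (simp add: ttrr_def)
    next
      case (Suc m)
      define r where "r = smult (b m) (R m) + smult (c m) (if m = 0 then 0 else R (m - 1))"
      have Rm: "degree (R m) = m" "lead_coeff (R m) = 1"
        using less.IH[of m] Suc by (metis lessI)+
      then have "R m \<noteq> 0" by auto
      have "degree (R (m - 1)) \<le> m"
        using less[of "m - 1"] Suc by (cases m) auto
      then have "degree r \<le> m"
        unfolding r_def using Rm(1)
        by (intro degree_add_le) (auto intro: order_trans[OF degree_smult_le])
      then have "degree (- r) < degree (pCons 0 (R m))"
        using Rm by auto
      moreover have "R n = - r + pCons 0 (R m)"
        using assms Suc by (simp add: ttrr_def r_def algebra_simps)
      ultimately have "degree (R n) = degree (pCons 0 (R m))"
        and "lead_coeff (R n) = lead_coeff (pCons 0 (R m))"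
        by (metis degree_add_eq_right, metis lead_coeff_add_le)
      with Rm \<open>R m \<noteq> 0\<close> Suc show ?thesis by simp
    qed
  qed
  then show ?thesis unfolding monic_seq_def by blast
qed

lemma monic_seq_sum_smult_eq_0:
  assumes "monic_seq Q" "(\<Sum>k<N. smult (a k) (Q k)) = 0" "k < N"
  shows "a k = 0"
  using assms(2,3)
proof (induction N arbitrary: k)
  case 0
  then show ?case by simp
next
  case (Suc N)
  have Q: "degree (Q k) = k" "coeff (Q k) k = 1" for k
    using assms(1) unfolding monic_seq_def by metis+
  have "coeff (\<Sum>k<N. smult (a k) (Q k)) N = 0"
    by (simp add: coeff_sum coeff_eq_0 Q)
  then have "a N = 0"
    using arg_cong[OF Suc.prems(1), of "\<lambda>p. coeff p N"] by (simp add: coeff_sum Q)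
  with Suc show ?case by (cases "k = N") auto
qed

lemma imat_act_monic_seq_eq_0:
  assumes "row_finite A" "monic_seq Q" "imat_act A Q i = 0"
  shows "A i j = 0"
proof -
  obtain N where N: "row_support A i \<subseteq> {..<N}"
    using assms(1) finite_nat_bounded unfolding row_finite_def by blast
  then have "(\<Sum>k<N. smult (A i k) (Q k)) = 0"
    using assms(3) imat_act_eq_sum[of "{..<N}" A i Q] by simp
  then show ?thesis
    using N monic_seq_sum_smult_eq_0[OF assms(2)] by (cases "j < N") (auto simp: row_support_def)
qed

lemma
  fixes A B :: "'a::comm_ring_1 imat"
  shows row_support_add: "row_support (\<lambda>i j. A i j + B i j) i \<subseteq> row_support A i \<union> row_support B i"
    and row_support_diff: "row_support (\<lambda>i j. A i j - B i j) i \<subseteq> row_support A i \<union> row_support B i"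
    and row_support_scale: "row_support (\<lambda>i j. c * A i j) i \<subseteq> row_support A i"
  by (auto simp: row_support_def)

lemma
  fixes A B :: "'a::comm_ring_1 imat"
  assumes "row_finite A" "row_finite B"
  shows row_finite_add: "row_finite (\<lambda>i j. A i j + B i j)"
    and row_finite_diff: "row_finite (\<lambda>i j. A i j - B i j)"
  using assms unfolding row_finite_def
  by (auto intro: finite_subset[OF row_support_add] finite_subset[OF row_support_diff])

lemma row_finite_scale: "row_finite A \<Longrightarrow> row_finite (\<lambda>i j. c * A i j :: 'a::comm_ring_1)"
  unfolding row_finite_def by (auto intro: finite_subset[OF row_support_scale])

lemma
  fixes A B :: "'a::comm_ring_1 imat"
  assumes "row_finite A" "row_finite B"
  shows imat_act_add: "imat_act (\<lambda>i j. A i j + B i j) v i = imat_act A v i + imat_act B v i"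
    and imat_act_diff: "imat_act (\<lambda>i j. A i j - B i j) v i = imat_act A v i - imat_act B v i"
proof -
  let ?S = "row_support A i \<union> row_support B i"
  have S: "finite ?S" using assms by (simp add: row_finite_def)
  have A: "imat_act A v i = (\<Sum>k\<in>?S. smult (A i k) (v k))"
    and B: "imat_act B v i = (\<Sum>k\<in>?S. smult (B i k) (v k))"
    by (intro imat_act_eq_sum S; blast)+
  show "imat_act (\<lambda>i j. A i j + B i j) v i = imat_act A v i + imat_act B v i"
    unfolding A B imat_act_eq_sum[OF S row_support_add]
    by (simp add: smult_add_left sum.distrib)
  show "imat_act (\<lambda>i j. A i j - B i j) v i = imat_act A v i - imat_act B v i"
    unfolding A B imat_act_eq_sum[OF S row_support_diff]
    by (simp add: smult_diff_left sum_subtractf)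
qed

lemma imat_act_scale:
  assumes "row_finite A"
  shows "imat_act (\<lambda>i j. c * A i j) v i = smult c (imat_act A v i)"
proof -
  have S: "finite (row_support A i)" using assms by (simp add: row_finite_def)
  show ?thesis
    unfolding imat_act_eq_sum[OF S row_support_scale] by (simp add: imat_act_def smult_sum_right)
qed

section \<open>The matrix relation\<close>

definition classical_matrix ::
    "'a::field_char_0 \<Rightarrow> 'a \<Rightarrow> 'a imat \<Rightarrow> 'a imat \<Rightarrow> 'a imat \<Rightarrow> 'a imat" where
  "classical_matrix c2 c3 L M D = (\<lambda>i j.
     imult (imult L L) D i j - 2 * imult (imult L D) M i j + imult (imult D M) M i j
       - (1/2) * (imult L D i j + imult D M i j) + (c3 + 1/16 - c2^2/4) * D i j)"

lemma
  assumes "row_finite L" "row_finite M" "row_finite D"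
  shows row_finite_classical_matrix: "row_finite (classical_matrix c2 c3 L M D)"
    and imat_act_classical_matrix: "imat_act (classical_matrix c2 c3 L M D) v i =
      imat_act (imult (imult L L) D) v i - smult 2 (imat_act (imult (imult L D) M) v i)
      + imat_act (imult (imult D M) M) v i
      - smult (1/2) (imat_act (imult L D) v i + imat_act (imult D M) v i)
      + smult (c3 + 1/16 - c2^2/4) (imat_act D v i)"
  using assms unfolding classical_matrix_def
  by (simp_all only: row_finite_imult row_finite_add row_finite_diff row_finite_scale
      imat_act_add imat_act_diff imat_act_scale)

lemma classical_matrix_eq_0:
  fixes c2 c3 :: "'a::field_char_0"
  assumes P: "ttrr P \<beta> \<gamma>" and Q: "ttrr (\<lambda>n. Pprime c2 c3 P (Suc n)) \<beta>' \<gamma>'"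
  shows "classical_matrix c2 c3 (tridiag \<beta> \<gamma>) (tridiag \<beta>' \<gamma>') Dmat i j = 0"
proof -
  define Q where "Q = (\<lambda>n. Pprime c2 c3 P (Suc n))"
  define L M where "L = tridiag \<beta> \<gamma>" and "M = tridiag \<beta>' \<gamma>'"
  define x where "x = [:0, 1 :: 'a:]"
  have fin: "row_finite L" "row_finite M" "row_finite (Dmat :: 'a imat)"
    unfolding L_def M_def by (rule banded_row_finite, rule banded_tridiag banded_Dmat)+
  have LP: "imat_act L P = (\<lambda>k. x * P k)" and MQ: "imat_act M Q = (\<lambda>k. x * Q k)"
    using P Q by (simp_all add: L_def M_def Q_def x_def imat_act_tridiag_ttrr fun_eq_iff)
  have DQ: "imat_act Dmat Q = (\<lambda>k. Ddiff c2 c3 (P k))"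
    using P by (simp add: Q_def ttrr_def imat_act_Dmat_Pprime fun_eq_iff)
  have LDQ: "imat_act (imult L Dmat) Q = (\<lambda>k. Ddiff c2 c3 (x * P k))"
    by (simp add: fun_eq_iff imat_act_imult fin DQ imat_act_Ddiff LP)
  have "imat_act (classical_matrix c2 c3 L M Dmat) Q i =
      Ddiff c2 c3 (x * (x * P i)) - smult 2 (x * Ddiff c2 c3 (x * P i))
      + x * (x * Ddiff c2 c3 (P i))
      - smult (1/2) (Ddiff c2 c3 (x * P i) + x * Ddiff c2 c3 (P i))
      + smult (c3 + 1/16 - c2\<^sup>2/4) (Ddiff c2 c3 (P i))"
    by (simp add: imat_act_classical_matrix fin imat_act_imult row_finite_imult
        DQ MQ LDQ imat_act_mult_left imat_act_Ddiff LP)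
  also have "\<dots> = 0"
    unfolding x_def by (rule Ddiff_mult_x_identity)
  finally show ?thesis
    using imat_act_monic_seq_eq_0 row_finite_classical_matrix[OF fin] ttrr_imp_monic_seq Q
    unfolding L_def M_def Q_def by blast
qed

lemma classical_matrix_tridiag_entry:
  fixes \<gamma> \<gamma>' :: "nat \<Rightarrow> 'a::field_char_0"
  shows "classical_matrix c2 c3 (tridiag \<beta> \<gamma>) (tridiag \<beta>' \<gamma>') Dmat (m + 3) m
    = of_nat (m + 1) * \<gamma> (m + 3) * \<gamma> (m + 2) - 2 * of_nat (m + 2) * \<gamma> (m + 3) * \<gamma>' (m + 1)
      + of_nat (m + 3) * \<gamma>' (m + 2) * \<gamma>' (m + 1)"
proof -
  define L M where "L = tridiag \<beta> \<gamma>" and "M = tridiag \<beta>' \<gamma>'"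
  have L: "banded (-1) 1 L" and M: "banded (-1) 1 M" and D: "banded 1 1 (Dmat :: 'a imat)"
    unfolding L_def M_def by (rule banded_tridiag banded_Dmat)+
  have LL: "banded (-2) 2 (imult L L)" and LD: "banded 0 2 (imult L Dmat)"
    and DM: "banded 0 2 (imult Dmat M)"
    using banded_imult[OF L L] banded_imult[OF L D] banded_imult[OF D M] by simp_all
  have "imult (imult L L) Dmat (m + 3) m = L (m + 3) (m + 2) * L (m + 2) (m + 1) * Dmat (m + 1) m"
    by (simp add: imult_banded_corner[OF banded_imult[OF L L] D, of _ "m + 1"]
        imult_banded_corner[OF L L, of _ "m + 2"])
  moreover have "imult (imult L Dmat) M (m + 3) m
      = L (m + 3) (m + 2) * Dmat (m + 2) (m + 1) * M (m + 1) m"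
    by (simp add: imult_banded_corner[OF LD M, of _ "m + 1"]
        imult_banded_corner[OF L D, of _ "m + 2"])
  moreover have "imult (imult Dmat M) M (m + 3) m
      = Dmat (m + 3) (m + 2) * M (m + 2) (m + 1) * M (m + 1) m"
    by (simp add: imult_banded_corner[OF DM M, of _ "m + 1"]
        imult_banded_corner[OF D M, of _ "m + 2"])
  moreover have "imult L Dmat (m + 3) m = 0" "imult Dmat M (m + 3) m = 0"
    by (rule banded_eq_0[OF LD] banded_eq_0[OF DM], simp)+
  ultimately show ?thesis
    by (simp add: classical_matrix_def L_def M_def tridiag_def Dmat_def algebra_simps)
qed

lemma classical_matrix_eq_0_imp_gamma'_nonzero:
  fixes \<gamma> \<gamma>' :: "nat \<Rightarrow> 'a::field_char_0"
  assumes E: "\<forall>i j. classical_matrix c2 c3 (tridiag \<beta> \<gamma>) (tridiag \<beta>' \<gamma>') Dmat i j = 0"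
    and \<gamma>: "\<forall>n\<ge>1. \<gamma> n \<noteq> 0" and "n \<ge> 1"
  shows "\<gamma>' n \<noteq> 0"
proof
  assume "\<gamma>' n = 0"
  obtain m where n: "n = m + 1" using \<open>n \<ge> 1\<close> by (metis add.commute le_Suc_ex)
  have "of_nat (m + 1) * \<gamma> (m + 3) * \<gamma> (m + 2) = 0"
    using E classical_matrix_tridiag_entry[of c2 c3 \<beta> \<gamma> \<beta>' \<gamma>' m] \<open>\<gamma>' n = 0\<close> n by simp
  with \<gamma> show False by (simp del: of_nat_Suc)
qed

theorem theorem3p3:
  fixes c2 c3 :: "'a::field_char_0"
    and P :: "nat \<Rightarrow> 'a poly"
    and \<beta> \<gamma> \<beta>' \<gamma>' :: "nat \<Rightarrow> 'a"
  assumes monP: "monic_seq P"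
    and recP: "ttrr P \<beta> \<gamma>"
    and gam: "\<forall>n\<ge>1. \<gamma> n \<noteq> 0"
    and recQ: "ttrr (\<lambda>n. Pprime c2 c3 P (Suc n)) \<beta>' \<gamma>'"
  shows "classical c2 c3 P \<longleftrightarrow>
    (let L = tridiag \<beta> \<gamma>; M = tridiag \<beta>' \<gamma>'; D = Dmat in
     (\<forall>i j. imult (imult L L) D i j - 2 * imult (imult L D) M i j + imult (imult D M) M i j
            - (1/2) * (imult L D i j + imult D M i j)
            + (c3 + 1/16 - c2^2/4) * D i j = 0))"
proof -
  have E: "\<forall>i j. classical_matrix c2 c3 (tridiag \<beta> \<gamma>) (tridiag \<beta>' \<gamma>') Dmat i j = 0"
    using classical_matrix_eq_0[OF recP recQ] by blast
  then have "\<forall>n\<ge>1. \<gamma>' n \<noteq> 0"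
    using classical_matrix_eq_0_imp_gamma'_nonzero gam by blast
  then have "classical c2 c3 P"
    unfolding classical_def orthogonal_seq_def using ttrr_imp_monic_seq[OF recQ] recQ by blast
  with E show ?thesis
    by (simp add: classical_matrix_def)
qed

end
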